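(* Let $R$ be a ring with identity and $(S,\leq)$ a strictly ordered monoid which is quasitotally ordered, and suppose $R$ is $S$-Armendariz. Let $A=R[[S]]$ be the ring of generalized power series. Then $A$ is a generalized right Baer ring if and only if $R$ is a generalized right Baer ring; and $A$ is a generalized right quasi-Baer ring if and only if $R$ is a generalized right quasi-Baer ring.
   Context: All rings are associative with identity. For a nonempty subset $X$ of a ring $R$, $r_R(X)=\{a\in R : xa=0 \text{ for all } x\in X\}$, and for a positive integer $n$, $X^n$ denotes the set of all products $a_1\cdots a_n$ with $a_i\in X$. A ring $R$ is generalized right Baer if for every nonempty subset $X$ of $R$ there exist a positive integer $n$ and an idempotent $e\in R$ with $r_R(X^n)=eR$; it is generalized right quasi-Baer if for every right ideal $I$ of $R$ there exist a positive integer $n$ and an idempotent $e\in R$ with $r_R(I^n)=eR$. An ordered monoid $(S,\leq)$ is a monoid with a partial order such that $u\le v$ implies $ut\le vt$ and $tu\le tv$; it is strictly ordered if $u<v$ implies $ut<vt$ and $tu<tv$ for all $t\in S$; it is quasitotally ordered if $\leq$ can be refined to an order $\preceq$ making $S$ a strictly totally ordered monoid. A subset of $S$ is artinian if every strictly decreasing sequence in it is finite, and narrow if every set of pairwise incomparable elements in it is finite. The ring of generalized power series $R[[S]]$ is the set of maps $f:S\to R$ with artinian and narrow support $\{s: f(s)\ne0\}$, with pointwise addition and multiplication $(fg)(s)=\sum_{uv=s} f(u)g(v)$ (the sum is finite over pairs with $f(u)\neq0\neq g(v)$). $R$ is $S$-Armendariz if whenever $f,g\in R[[S]]$ satisfy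 $fg=0$, then $f(u)g(v)=0$ for all $u,v\in S$. *)

theory Defs
  imports "HOL-Algebra.Ring" "HOL-Algebra.AbelCoset"
begin

definition ordered_monoid :: "('b::{monoid_mult,order}) itself \<Rightarrow> bool" where
  "ordered_monoid _ \<longleftrightarrow>
     (\<forall>u v t :: 'b. u \<le> v \<longrightarrow> u * t \<le> v * t \<and> t * u \<le> t * v)"

definition strictly_ordered_monoid :: "('b::{monoid_mult,order}) itself \<Rightarrow> bool" where
  "strictly_ordered_monoid T \<longleftrightarrow> ordered_monoid T \<and>
     (\<forall>u v t :: 'b. u < v \<longrightarrow> u * t < v * t \<and> t * u < t * v)"

definition strictly_totally_ordered_monoid_rel :: "('b::monoid_mult \<Rightarrow> 'b \<Rightarrow> bool) \<Rightarrow> bool" where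
  "strictly_totally_ordered_monoid_rel P \<longleftrightarrow>
     (\<forall>x. P x x) \<and> (\<forall>x y. P x y \<and> P y x \<longrightarrow> x = y) \<and>
     (\<forall>x y z. P x y \<and> P y z \<longrightarrow> P x z) \<and>
     (\<forall>x y. P x y \<or> P y x) \<and>
     (\<forall>u v t. P u v \<longrightarrow> P (u * t) (v * t) \<and> P (t * u) (t * v)) \<and>
     (\<forall>u v t. P u v \<and> u \<noteq> v \<longrightarrow>
        (P (u * t) (v * t) \<and> u * t \<noteq> v * t) \<and> (P (t * u) (t * v) \<and> t * u \<noteq> t * v))"

definition quasitotally_ordered :: "('b::{monoid_mult,order}) itself \<Rightarrow> bool" where
  "quasitotally_ordered _ \<longleftrightarrow>
     (\<exists>P :: 'b \<Rightarrow> 'b \<Rightarrow> bool. (\<forall>u v. u \<le> v \<longrightarrow> P u v) \<and> strictly_totally_ordered_monoid_rel P)"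

definition artinian_set :: "('b::order) set \<Rightarrow> bool" where
  "artinian_set X \<longleftrightarrow> \<not> (\<exists>f :: nat \<Rightarrow> 'b. \<forall>i. f i \<in> X \<and> f (Suc i) < f i)"

definition narrow_set :: "('b::order) set \<Rightarrow> bool" where
  "narrow_set X \<longleftrightarrow> (\<forall>Y \<subseteq> X. (\<forall>x\<in>Y. \<forall>y\<in>Y. x \<noteq> y \<longrightarrow> \<not> x \<le> y \<and> \<not> y \<le> x) \<longrightarrow> finite Y)"

definition gps_support :: "('b \<Rightarrow> 'a::zero) \<Rightarrow> 'b set" where
  "gps_support f = {s. f s \<noteq> 0}"

definition gps_carrier :: "(('b::{monoid_mult,order}) \<Rightarrow> ('a::ring_1)) set" where
  "gps_carrier = {f. artinian_set (gps_support f) \<and> narrow_set (gps_support f)}"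

definition gps_mult :: "(('b::{monoid_mult,order}) \<Rightarrow> ('a::ring_1)) \<Rightarrow> ('b \<Rightarrow> 'a) \<Rightarrow> 'b \<Rightarrow> 'a" where
  "gps_mult f g s = (\<Sum>(u, v) \<in> {(u, v). u * v = s \<and> f u \<noteq> 0 \<and> g v \<noteq> 0}. f u * g v)"

definition gps_ring :: "(('b::{monoid_mult,order}) \<Rightarrow> ('a::ring_1)) ring" where
  "gps_ring = \<lparr> carrier = gps_carrier, monoid.mult = gps_mult,
     one = (\<lambda>s. if s = 1 then 1 else 0), zero = (\<lambda>s. 0), add = (\<lambda>f g s. f s + g s) \<rparr>"

definition type_ring :: "('a::ring_1) ring" where
  "type_ring = \<lparr> carrier = UNIV, monoid.mult = (*), one = 1, zero = 0, add = (+) \<rparr>"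

definition S_Armendariz :: "('b::{monoid_mult,order}) itself \<Rightarrow> ('a::ring_1) itself \<Rightarrow> bool" where
  "S_Armendariz _ _ \<longleftrightarrow>
     (\<forall>f \<in> (gps_carrier :: ('b \<Rightarrow> 'a) set). \<forall>g \<in> gps_carrier.
        gps_mult f g = (\<lambda>s. 0) \<longrightarrow> (\<forall>u v. f u * g v = 0))"

definition r_ann :: "('a, 'm) ring_scheme \<Rightarrow> 'a set \<Rightarrow> 'a set" where
  "r_ann R X = {a \<in> carrier R. \<forall>x\<in>X. x \<otimes>\<^bsub>R\<^esub> a = \<zero>\<^bsub>R\<^esub>}"

text \<open>X^n = set of all products a_1 ... a_n with a_i in X (used for n >= 1).\<close>
fun set_pow :: "('a, 'm) ring_scheme \<Rightarrow> 'a set \<Rightarrow> nat \<Rightarrow> 'a set" where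
  "set_pow R X 0 = {\<one>\<^bsub>R\<^esub>}"
| "set_pow R X (Suc 0) = X"
| "set_pow R X (Suc (Suc n)) = {a \<otimes>\<^bsub>R\<^esub> b | a b. a \<in> set_pow R X (Suc n) \<and> b \<in> X}"

definition right_ideal :: "'a set \<Rightarrow> ('a, 'm) ring_scheme \<Rightarrow> bool" where
  "right_ideal I R \<longleftrightarrow> additive_subgroup I R \<and>
     (\<forall>x\<in>I. \<forall>r\<in>carrier R. x \<otimes>\<^bsub>R\<^esub> r \<in> I)"

definition gen_right_Baer :: "('a, 'm) ring_scheme \<Rightarrow> bool" where
  "gen_right_Baer R \<longleftrightarrow>
     (\<forall>X. X \<subseteq> carrier R \<and> X \<noteq> {} \<longrightarrow>
        (\<exists>n::nat. n > 0 \<and> (\<exists>e\<in>carrier R. e \<otimes>\<^bsub>R\<^esub> e = e \<and>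
           r_ann R (set_pow R X n) = {e \<otimes>\<^bsub>R\<^esub> a | a. a \<in> carrier R})))"

definition gen_right_quasi_Baer :: "('a, 'm) ring_scheme \<Rightarrow> bool" where
  "gen_right_quasi_Baer R \<longleftrightarrow>
     (\<forall>I. right_ideal I R \<longrightarrow>
        (\<exists>n::nat. n > 0 \<and> (\<exists>e\<in>carrier R. e \<otimes>\<^bsub>R\<^esub> e = e \<and>
           r_ann R (set_pow R I n) = {e \<otimes>\<^bsub>R\<^esub> a | a. a \<in> carrier R})))"

end

theory Submission
  imports Defs "HOL-Library.Ramsey" "HOL-Library.Set_Algebras"
begin

text \<open>By Ramsey's theorem, a subset of S is artinian and narrow iff every sequence in it has an
  infinite weakly increasing subsequence; in this form it is evident that supports of sums and
  products of series are again artinian and narrow, and that each coefficient of a product is a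
  finite sum, which gives associativity of the convolution.

  The S-Armendariz property then does the rest. For a set X of series with coefficient set C, a
  series g annihilates X^n on the right iff every coefficient of g is annihilated by C^n.
  Every idempotent e of R[[S]] is a constant: e and 1 - e annihilate each other on both sides,
  so all products of their coefficients vanish. Hence r(X^n) = e R[[S]] iff r(C^n) = e(1) R,
  which transfers the generalized Baer property in both directions. For right ideals one passes
  between an ideal of R[[S]] and the additive closure of its coefficients, whose powers have the
  same right annihilators as those of the coefficients.\<close>

section \<open>Partially well-ordered sets\<close>

definition pwo_set :: "'b::order set \<Rightarrow> bool" where
  "pwo_set A \<longleftrightarrow> (\<forall>(x::nat \<Rightarrow> 'b) Z. infinite Z \<longrightarrow> x ` Z \<subseteq> A \<longrightarrow>
     (\<exists>Y\<subseteq>Z. infinite Y \<and> (\<forall>i\<in>Y. \<forall>j\<in>Y. i < j \<longrightarrow> x i \<le> x j)))"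

lemma pwo_setI:
  assumes "\<And>(x::nat \<Rightarrow> 'b::order) Z. infinite Z \<Longrightarrow> x ` Z \<subseteq> A \<Longrightarrow>
             \<exists>Y\<subseteq>Z. infinite Y \<and> (\<forall>i\<in>Y. \<forall>j\<in>Y. i < j \<longrightarrow> x i \<le> x j)"
  shows "pwo_set A"
  unfolding pwo_set_def using assms by (intro allI impI)

lemma pwo_setD:
  fixes x :: "nat \<Rightarrow> 'b::order"
  assumes "pwo_set A" "infinite Z" "x ` Z \<subseteq> A"
  obtains Y where "Y \<subseteq> Z" "infinite Y" "\<forall>i\<in>Y. \<forall>j\<in>Y. i < j \<longrightarrow> x i \<le> x j"
  using assms(1)[unfolded pwo_set_def, rule_format, OF assms(2,3)] that by blast

lemma pwo_set_subset: "pwo_set B \<Longrightarrow> A \<subseteq> B \<Longrightarrow> pwo_set A"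
  unfolding pwo_set_def by (meson subset_trans)

lemma pwo_set_finite:
  assumes "finite A"
  shows "pwo_set A"
proof (rule pwo_setI)
  fix x :: "nat \<Rightarrow> 'a" and Z
  assume Z: "infinite Z" and "x ` Z \<subseteq> A"
  then have "finite (x ` Z)" using assms finite_subset by blast
  then obtain i where "infinite {j\<in>Z. x j = x i}"
    using pigeonhole_infinite[OF Z] by blast
  moreover have "{j\<in>Z. x j = x i} \<subseteq> Z" by blast
  ultimately show "\<exists>Y\<subseteq>Z. infinite Y \<and> (\<forall>i\<in>Y. \<forall>j\<in>Y. i < j \<longrightarrow> x i \<le> x j)"
    by (intro exI[of _ "{j\<in>Z. x j = x i}"] conjI) simp_all
qed

lemma pwo_set_Un:
  assumes "pwo_set A" "pwo_set B"
  shows "pwo_set (A \<union> B)"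
proof (rule pwo_setI)
  fix x :: "nat \<Rightarrow> 'a" and Z
  assume Z: "infinite Z" and "x ` Z \<subseteq> A \<union> B"
  then have "Z = {i\<in>Z. x i \<in> A} \<union> {i\<in>Z. x i \<in> B}" by auto
  then have "infinite ({i\<in>Z. x i \<in> A} \<union> {i\<in>Z. x i \<in> B})" using Z by simp
  then consider "infinite {i\<in>Z. x i \<in> A}" | "infinite {i\<in>Z. x i \<in> B}" by blast
  then show "\<exists>Y\<subseteq>Z. infinite Y \<and> (\<forall>i\<in>Y. \<forall>j\<in>Y. i < j \<longrightarrow> x i \<le> x j)"
  proof cases
    case 1
    then obtain Y where "Y \<subseteq> {i\<in>Z. x i \<in> A}" "infinite Y" "\<forall>i\<in>Y. \<forall>j\<in>Y. i < j \<longrightarrow> x i \<le> x j"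
      using pwo_setD[OF assms(1)] by blast
    then show ?thesis by blast
  next
    case 2
    then obtain Y where "Y \<subseteq> {i\<in>Z. x i \<in> B}" "infinite Y" "\<forall>i\<in>Y. \<forall>j\<in>Y. i < j \<longrightarrow> x i \<le> x j"
      using pwo_setD[OF assms(2)] by blast
    then show ?thesis by blast
  qed
qed

lemma pwo_set_two_sequences:
  fixes x :: "nat \<Rightarrow> 'b::order" and y :: "nat \<Rightarrow> 'c::order"
  assumes "pwo_set A" "pwo_set B" "infinite Z" "x ` Z \<subseteq> A" "y ` Z \<subseteq> B"
  obtains Y where "Y \<subseteq> Z" "infinite Y" "\<forall>i\<in>Y. \<forall>j\<in>Y. i < j \<longrightarrow> x i \<le> x j \<and> y i \<le> y j"
proof -
  obtain Y1 where Y1: "Y1 \<subseteq> Z" "infinite Y1" "\<forall>i\<in>Y1. \<forall>j\<in>Y1. i < j \<longrightarrow> x i \<le> x j"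
    using pwo_setD[OF assms(1,3,4)] .
  have "y ` Y1 \<subseteq> B" using Y1(1) assms(5) by blast
  then obtain Y2 where Y2: "Y2 \<subseteq> Y1" "infinite Y2" "\<forall>i\<in>Y2. \<forall>j\<in>Y2. i < j \<longrightarrow> y i \<le> y j"
    by (rule pwo_setD[OF assms(2) Y1(2)])
  show ?thesis
  proof (rule that)
    show "Y2 \<subseteq> Z" using Y1(1) Y2(1) by (rule subset_trans[rotated])
    show "\<forall>i\<in>Y2. \<forall>j\<in>Y2. i < j \<longrightarrow> x i \<le> x j \<and> y i \<le> y j"
      using Y1(3) Y2(1,3) by blast
  qed (rule Y2(2))
qed

lemma infinite_nat_set_obtain_less:
  assumes "infinite (Y :: nat set)"
  obtains i j where "i \<in> Y" "j \<in> Y" "i < j"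
proof -
  have unbounded: "\<forall>m. \<exists>n>m. n \<in> Y" using assms by (simp add: infinite_nat_iff_unbounded)
  then obtain i where "i \<in> Y" by blast
  moreover obtain j where "j \<in> Y" "i < j" using unbounded by blast
  ultimately show ?thesis by (rule that)
qed

lemma pwo_set_imp_artinian_set:
  assumes "pwo_set A"
  shows "artinian_set A"
  unfolding artinian_set_def
proof
  assume "\<exists>f. \<forall>i. f i \<in> A \<and> f (Suc i) < f i"
  then obtain f where fA: "range f \<subseteq> A" and dec: "\<And>i. f (Suc i) < f i" by blast
  obtain Y where "Y \<subseteq> UNIV" and Y: "infinite Y" and inc: "\<forall>i\<in>Y. \<forall>j\<in>Y. i < j \<longrightarrow> f i \<le> f j"
    by (rule pwo_setD[OF assms infinite_UNIV_nat fA])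
  obtain i j where ij: "i \<in> Y" "j \<in> Y" "i < j" using Y by (rule infinite_nat_set_obtain_less)
  have chain: "f n < f m" if "m < n" for m n
    using that
  proof (induction n)
    case (Suc n)
    then show ?case using dec[of n] by (metis less_Suc_eq less_trans)
  qed simp
  have "f i \<le> f j" using inc ij by blast
  moreover have "f j < f i" using chain ij(3) .
  ultimately show False by simp
qed

lemma pwo_set_imp_narrow_set:
  assumes "pwo_set A"
  shows "narrow_set A"
  unfolding narrow_set_def
proof (intro allI impI, rule ccontr)
  fix Y' assume Y': "Y' \<subseteq> A" "\<forall>x\<in>Y'. \<forall>y\<in>Y'. x \<noteq> y \<longrightarrow> \<not> x \<le> y \<and> \<not> y \<le> x" "infinite Y'"
  obtain x :: "nat \<Rightarrow> _" where x: "inj x" "range x \<subseteq> Y'"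
    using infinite_countable_subset[OF Y'(3)] by blast
  have xA: "range x \<subseteq> A" using x(2) Y'(1) by blast
  obtain Y where "Y \<subseteq> UNIV" and Y: "infinite Y" and inc: "\<forall>i\<in>Y. \<forall>j\<in>Y. i < j \<longrightarrow> x i \<le> x j"
    by (rule pwo_setD[OF assms infinite_UNIV_nat xA])
  obtain i j where ij: "i \<in> Y" "j \<in> Y" "i < j" using Y by (rule infinite_nat_set_obtain_less)
  then have "x i \<noteq> x j" using x(1) by (simp add: inj_eq)
  moreover have "x i \<in> Y'" "x j \<in> Y'" using x(2) by auto
  ultimately show False using inc ij Y'(2) by blast
qed

lemma artinian_narrow_imp_pwo_set:
  assumes art: "artinian_set A" and nar: "narrow_set A"
  shows "pwo_set A"
proof (rule pwo_setI)
  fix x :: "nat \<Rightarrow> 'a" and Z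
  assume Z: "infinite Z" and xZ: "x ` Z \<subseteq> A"
  define cmp :: "'a \<Rightarrow> 'a \<Rightarrow> nat" where
    "cmp a b = (if a \<le> b then 0 else if b < a then 1 else 2)" for a b
  have "\<forall>i\<in>Z. \<forall>j\<in>Z. i \<noteq> j \<longrightarrow> cmp (x (Min {i, j})) (x (Max {i, j})) < 3"
    by (simp add: cmp_def)
  from Ramsey2[OF Z this] obtain Y t where Y: "Y \<subseteq> Z" "infinite Y" "t < 3"
    and mono_colour: "\<forall>i\<in>Y. \<forall>j\<in>Y. i \<noteq> j \<longrightarrow> cmp (x (Min {i, j})) (x (Max {i, j})) = t"
    by blast
  have colour: "cmp (x i) (x j) = t" if "i \<in> Y" "j \<in> Y" "i < j" for i j
    using mono_colour that by (force simp: min_def max_def)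
  have cmp_cases: "cmp a b = 0 \<Longrightarrow> a \<le> b" "cmp a b = 1 \<Longrightarrow> b < a"
    "cmp a b = 2 \<Longrightarrow> \<not> a \<le> b \<and> \<not> b \<le> a" for a b
    by (auto simp: cmp_def split: if_splits)
  consider "t = 0" | "t = 1" | "t = 2" using Y(3) by linarith
  then show "\<exists>Y\<subseteq>Z. infinite Y \<and> (\<forall>i\<in>Y. \<forall>j\<in>Y. i < j \<longrightarrow> x i \<le> x j)"
  proof cases
    case 1
    then have "\<forall>i\<in>Y. \<forall>j\<in>Y. i < j \<longrightarrow> x i \<le> x j"
      using colour cmp_cases(1) by simp
    with Y show ?thesis by blast
  next
    case 2
    have dec: "x (enumerate Y (Suc n)) < x (enumerate Y n)" for n
    proof -
      have "cmp (x (enumerate Y n)) (x (enumerate Y (Suc n))) = t"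
        by (rule colour) (simp_all add: enumerate_in_set enumerate_step Y(2))
      then show ?thesis using 2 cmp_cases(2) by simp
    qed
    have "x (enumerate Y n) \<in> A" for n
      using enumerate_in_set[OF Y(2)] Y(1) xZ by blast
    with dec have "\<exists>f. \<forall>i. f i \<in> A \<and> f (Suc i) < f i"
      by (intro exI[of _ "\<lambda>n. x (enumerate Y n)"]) simp
    with art show ?thesis unfolding artinian_set_def by contradiction
  next
    case 3
    then have incomparable: "\<not> x i \<le> x j \<and> \<not> x j \<le> x i" if "i \<in> Y" "j \<in> Y" "i < j" for i j
      using colour[OF that] cmp_cases(3) by simp
    have antichain: "\<forall>a\<in>x ` Y. \<forall>b\<in>x ` Y. a \<noteq> b \<longrightarrow> \<not> a \<le> b \<and> \<not> b \<le> a"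
      using incomparable by (metis imageE linorder_neqE_nat)
    have "inj_on x Y"
      using incomparable by (metis inj_onI linorder_neqE_nat order_refl)
    then have "infinite (x ` Y)" using Y(2) finite_imageD by blast
    moreover have "finite (x ` Y)"
      using nar[unfolded narrow_set_def, rule_format, of "x ` Y"] antichain Y(1) xZ by blast
    ultimately show ?thesis by contradiction
  qed
qed

lemma gps_carrier_iff_pwo_set: "f \<in> gps_carrier \<longleftrightarrow> pwo_set (gps_support f)"
  unfolding gps_carrier_def
  using artinian_narrow_imp_pwo_set pwo_set_imp_artinian_set pwo_set_imp_narrow_set by blast

section \<open>Convolution of generalized power series\<close>

lemma ordered_monoidD:
  fixes u v t :: "'b::{monoid_mult,order}"
  assumes "ordered_monoid TYPE('b)" "u \<le> v"
  shows "u * t \<le> v * t" "t * u \<le> t * v"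
  using assms unfolding ordered_monoid_def by blast+

lemma strictly_ordered_monoidD:
  fixes u v t :: "'b::{monoid_mult,order}"
  assumes "strictly_ordered_monoid TYPE('b)" "u < v"
  shows "u * t < v * t" "t * u < t * v"
  using assms unfolding strictly_ordered_monoid_def by blast+

lemma strictly_ordered_imp_ordered_monoid:
  "strictly_ordered_monoid TYPE('b::{monoid_mult,order}) \<Longrightarrow> ordered_monoid TYPE('b)"
  unfolding strictly_ordered_monoid_def by blast

lemma pwo_set_times:
  fixes A B :: "'b::{monoid_mult,order} set"
  assumes om: "ordered_monoid TYPE('b)" and "pwo_set A" "pwo_set B"
  shows "pwo_set (A * B)"
proof (rule pwo_setI)
  fix x :: "nat \<Rightarrow> 'b" and Z
  assume Z: "infinite Z" and "x ` Z \<subseteq> A * B"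
  then have "\<forall>i\<in>Z. \<exists>p. fst p \<in> A \<and> snd p \<in> B \<and> x i = fst p * snd p"
    unfolding set_times_def by fastforce
  then obtain p where p: "\<forall>i\<in>Z. fst (p i) \<in> A \<and> snd (p i) \<in> B \<and> x i = fst (p i) * snd (p i)"
    by metis
  have "(\<lambda>i. fst (p i)) ` Z \<subseteq> A" "(\<lambda>i. snd (p i)) ` Z \<subseteq> B" using p by auto
  then obtain Y where Y: "Y \<subseteq> Z" "infinite Y"
    and inc: "\<forall>i\<in>Y. \<forall>j\<in>Y. i < j \<longrightarrow> fst (p i) \<le> fst (p j) \<and> snd (p i) \<le> snd (p j)"
    using pwo_set_two_sequences[OF assms(2,3) Z] by metis
  have "x i \<le> x j" if "i \<in> Y" "j \<in> Y" "i < j" for i j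
  proof -
    have le: "fst (p i) \<le> fst (p j)" "snd (p i) \<le> snd (p j)" using inc that by blast+
    have "x i = fst (p i) * snd (p i)" using p that(1) Y(1) by blast
    also have "\<dots> \<le> fst (p j) * snd (p i)" using ordered_monoidD(1)[OF om le(1)] .
    also have "\<dots> \<le> fst (p j) * snd (p j)" using ordered_monoidD(2)[OF om le(2)] .
    also have "\<dots> = x j" using p that(2) Y(1) by (metis subsetD)
    finally show ?thesis .
  qed
  with Y show "\<exists>Y\<subseteq>Z. infinite Y \<and> (\<forall>i\<in>Y. \<forall>j\<in>Y. i < j \<longrightarrow> x i \<le> x j)" by blast
qed

lemma finite_factorizations:
  fixes A B :: "'b::{monoid_mult,order} set"
  assumes som: "strictly_ordered_monoid TYPE('b)" and "pwo_set A" "pwo_set B"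
  shows "finite {(u, v). u \<in> A \<and> v \<in> B \<and> u * v = s}"
proof (rule ccontr)
  let ?F = "{(u, v). u \<in> A \<and> v \<in> B \<and> u * v = s}"
  assume "infinite ?F"
  then obtain p :: "nat \<Rightarrow> 'b \<times> 'b" where p: "inj p" "range p \<subseteq> ?F"
    using infinite_countable_subset by blast
  then have "(\<lambda>i. fst (p i)) ` UNIV \<subseteq> A" "(\<lambda>i. snd (p i)) ` UNIV \<subseteq> B" by auto
  then obtain Y where "Y \<subseteq> UNIV" and Y: "infinite Y"
    and inc: "\<forall>i\<in>Y. \<forall>j\<in>Y. i < j \<longrightarrow> fst (p i) \<le> fst (p j) \<and> snd (p i) \<le> snd (p j)"
    by (rule pwo_set_two_sequences[OF assms(2,3) infinite_UNIV_nat])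
  obtain i j where ij: "i \<in> Y" "j \<in> Y" "i < j" using Y by (rule infinite_nat_set_obtain_less)
  obtain a b c d where pij: "p i = (a, b)" "p j = (c, d)" by fastforce
  have "fst (p i) \<le> fst (p j) \<and> snd (p i) \<le> snd (p j)" using inc ij by blast
  then have le: "a \<le> c" "b \<le> d" using pij by simp_all
  have "p i \<noteq> p j" using p(1) ij(3) by (simp add: inj_eq)
  then have ne: "(a, b) \<noteq> (c, d)" using pij by simp
  have "p i \<in> ?F" "p j \<in> ?F" by (rule subsetD[OF p(2) rangeI])+
  then have eq: "a * b = c * d" using pij by simp
  show False
  proof (cases "a = c")
    case True
    with le ne have "b < d" by auto
    then have "c * b < c * d" by (rule strictly_ordered_monoidD(2)[OF som])
    with eq True show False by simp
  next
    case False
    with le have "a * b < c * b" by (simp add: strictly_ordered_monoidD(1)[OF som])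
    also have "c * b \<le> c * d"
      using ordered_monoidD(2)[OF strictly_ordered_imp_ordered_monoid[OF som] le(2)] .
    finally show False using eq by simp
  qed
qed

lemma gps_mult_eq_sum_factorizations:
  fixes f g :: "'b::{monoid_mult,order} \<Rightarrow> 'a::ring_1"
  assumes "finite {(u, v). u \<in> A \<and> v \<in> B \<and> u * v = s}"
    and "gps_support f \<subseteq> A" "gps_support g \<subseteq> B"
  shows "gps_mult f g s = (\<Sum>(u, v) \<in> {(u, v). u \<in> A \<and> v \<in> B \<and> u * v = s}. f u * g v)"
  unfolding gps_mult_def
  by (rule sum.mono_neutral_left[OF assms(1)]) (use assms(2,3) in \<open>auto simp: gps_support_def\<close>)

lemma gps_support_mult:
  "gps_support (gps_mult f g) \<subseteq> gps_support f * gps_support g"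
proof
  fix s assume "s \<in> gps_support (gps_mult f g)"
  then have "{(u, v). u * v = s \<and> f u \<noteq> 0 \<and> g v \<noteq> 0} \<noteq> {}"
    by (force simp: gps_support_def gps_mult_def)
  then show "s \<in> gps_support f * gps_support g"
    by (auto simp: gps_support_def set_times_def)
qed

lemma gps_mult_closed:
  fixes f g :: "'b::{monoid_mult,order} \<Rightarrow> 'a::ring_1"
  assumes "ordered_monoid TYPE('b)" "f \<in> gps_carrier" "g \<in> gps_carrier"
  shows "gps_mult f g \<in> gps_carrier"
  using assms pwo_set_times pwo_set_subset[OF _ gps_support_mult]
  unfolding gps_carrier_iff_pwo_set by blast

lemma gps_add_closed:
  "f \<in> gps_carrier \<Longrightarrow> g \<in> gps_carrier \<Longrightarrow> (\<lambda>s. f s + g s) \<in> gps_carrier"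
proof -
  have "gps_support (\<lambda>s. f s + g s) \<subseteq> gps_support f \<union> gps_support g"
    by (auto simp: gps_support_def)
  then show "f \<in> gps_carrier \<Longrightarrow> g \<in> gps_carrier \<Longrightarrow> (\<lambda>s. f s + g s) \<in> gps_carrier"
    unfolding gps_carrier_iff_pwo_set by (metis pwo_set_Un pwo_set_subset)
qed

lemma gps_uminus_closed: "f \<in> gps_carrier \<Longrightarrow> (\<lambda>s. - f s) \<in> gps_carrier"
  by (simp add: gps_carrier_def gps_support_def)

lemma gps_scale_closed: "f \<in> gps_carrier \<Longrightarrow> (\<lambda>s. c * f s) \<in> gps_carrier"
proof -
  have "gps_support (\<lambda>s. c * f s) \<subseteq> gps_support f" by (auto simp: gps_support_def)
  then show "f \<in> gps_carrier \<Longrightarrow> (\<lambda>s. c * f s) \<in> gps_carrier"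
    unfolding gps_carrier_iff_pwo_set by (rule pwo_set_subset[rotated])
qed

lemma gps_diff_closed:
  "f \<in> gps_carrier \<Longrightarrow> g \<in> gps_carrier \<Longrightarrow> (\<lambda>s. f s - g s) \<in> gps_carrier"
  using gps_add_closed[OF _ gps_uminus_closed, of f g] by simp

lemma gps_mult_mult_left_eq_triple_sum:
  fixes f g h :: "'b::{monoid_mult,order} \<Rightarrow> 'a::ring_1"
  assumes som: "strictly_ordered_monoid TYPE('b)"
    and "f \<in> gps_carrier" "g \<in> gps_carrier" "h \<in> gps_carrier"
  shows "gps_mult (gps_mult f g) h s =
    (\<Sum>(u, v, w) \<in> {(u, v, w). u \<in> gps_support f \<and> v \<in> gps_support g \<and> w \<in> gps_support h \<and> u * v * w = s}.
       f u * g v * h w)"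
proof -
  let ?A = "gps_support f" and ?B = "gps_support g" and ?C = "gps_support h"
  have pwo: "pwo_set ?A" "pwo_set ?B" "pwo_set ?C"
    using assms(2-4) by (simp_all add: gps_carrier_iff_pwo_set)
  define T where "T = {(x, w). x \<in> ?A * ?B \<and> w \<in> ?C \<and> x * w = s}"
  define F where "F x = {(u, v). u \<in> ?A \<and> v \<in> ?B \<and> u * v = x}" for x
  have fin_T: "finite T" unfolding T_def
    using finite_factorizations[OF som pwo_set_times[OF strictly_ordered_imp_ordered_monoid[OF som]]] pwo
    by blast
  have fin_F: "finite (F x)" for x
    unfolding F_def using finite_factorizations[OF som pwo(1,2)] .
  have "gps_mult (gps_mult f g) h s = (\<Sum>(x, w)\<in>T. gps_mult f g x * h w)"
    unfolding T_def by (rule gps_mult_eq_sum_factorizations[OF fin_T[unfolded T_def] gps_support_mult order_refl])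
  also have "\<dots> = (\<Sum>p\<in>T. \<Sum>q\<in>F (fst p). f (fst q) * g (snd q) * h (snd p))"
    by (simp add: gps_mult_eq_sum_factorizations[OF fin_F[unfolded F_def]] F_def sum_distrib_right split_def)
  also have "\<dots> = (\<Sum>(p, q) \<in> Sigma T (\<lambda>p. F (fst p)). f (fst q) * g (snd q) * h (snd p))"
    by (rule sum.Sigma[OF fin_T]) (simp add: fin_F)
  also have "\<dots> = (\<Sum>(u, v, w) \<in> {(u, v, w). u \<in> ?A \<and> v \<in> ?B \<and> w \<in> ?C \<and> u * v * w = s}. f u * g v * h w)"
    by (rule sum.reindex_bij_witness[where i="\<lambda>(u, v, w). ((u * v, w), (u, v))"
          and j="\<lambda>((x, w), (u, v)). (u, v, w)"])
      (auto simp: T_def F_def set_times_def)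
  finally show ?thesis .
qed

lemma gps_mult_mult_right_eq_triple_sum:
  fixes f g h :: "'b::{monoid_mult,order} \<Rightarrow> 'a::ring_1"
  assumes som: "strictly_ordered_monoid TYPE('b)"
    and "f \<in> gps_carrier" "g \<in> gps_carrier" "h \<in> gps_carrier"
  shows "gps_mult f (gps_mult g h) s =
    (\<Sum>(u, v, w) \<in> {(u, v, w). u \<in> gps_support f \<and> v \<in> gps_support g \<and> w \<in> gps_support h \<and> u * v * w = s}.
       f u * g v * h w)"
proof -
  let ?A = "gps_support f" and ?B = "gps_support g" and ?C = "gps_support h"
  have pwo: "pwo_set ?A" "pwo_set ?B" "pwo_set ?C"
    using assms(2-4) by (simp_all add: gps_carrier_iff_pwo_set)
  define T where "T = {(u, y). u \<in> ?A \<and> y \<in> ?B * ?C \<and> u * y = s}"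
  define F where "F y = {(v, w). v \<in> ?B \<and> w \<in> ?C \<and> v * w = y}" for y
  have fin_T: "finite T" unfolding T_def
    using finite_factorizations[OF som _ pwo_set_times[OF strictly_ordered_imp_ordered_monoid[OF som]]] pwo
    by blast
  have fin_F: "finite (F y)" for y
    unfolding F_def using finite_factorizations[OF som pwo(2,3)] .
  have "gps_mult f (gps_mult g h) s = (\<Sum>(u, y)\<in>T. f u * gps_mult g h y)"
    unfolding T_def by (rule gps_mult_eq_sum_factorizations[OF fin_T[unfolded T_def] order_refl gps_support_mult])
  also have "\<dots> = (\<Sum>p\<in>T. \<Sum>q\<in>F (snd p). f (fst p) * (g (fst q) * h (snd q)))"
    by (simp add: gps_mult_eq_sum_factorizations[OF fin_F[unfolded F_def]] F_def sum_distrib_left split_def)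
  also have "\<dots> = (\<Sum>(p, q) \<in> Sigma T (\<lambda>p. F (snd p)). f (fst p) * (g (fst q) * h (snd q)))"
    by (rule sum.Sigma[OF fin_T]) (simp add: fin_F)
  also have "\<dots> = (\<Sum>(u, v, w) \<in> {(u, v, w). u \<in> ?A \<and> v \<in> ?B \<and> w \<in> ?C \<and> u * v * w = s}. f u * g v * h w)"
    by (rule sum.reindex_bij_witness[where i="\<lambda>(u, v, w). ((u, v * w), (v, w))"
          and j="\<lambda>((u, y), (v, w)). (u, v, w)"])
      (auto simp: T_def F_def set_times_def mult.assoc)
  finally show ?thesis .
qed

lemma gps_mult_assoc:
  fixes f g h :: "'b::{monoid_mult,order} \<Rightarrow> 'a::ring_1"
  assumes "strictly_ordered_monoid TYPE('b)"
    and "f \<in> gps_carrier" "g \<in> gps_carrier" "h \<in> gps_carrier"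
  shows "gps_mult (gps_mult f g) h = gps_mult f (gps_mult g h)"
  using gps_mult_mult_left_eq_triple_sum[OF assms] gps_mult_mult_right_eq_triple_sum[OF assms]
  by (simp add: fun_eq_iff)

definition gps_const :: "'a::ring_1 \<Rightarrow> 'b::{monoid_mult,order} \<Rightarrow> 'a" where
  "gps_const c = (\<lambda>s. if s = 1 then c else 0)"

lemma gps_const_in_carrier: "gps_const c \<in> gps_carrier"
proof -
  have "gps_support (gps_const c) \<subseteq> {1}" by (auto simp: gps_support_def gps_const_def)
  then show ?thesis
    unfolding gps_carrier_iff_pwo_set by (rule pwo_set_subset[OF pwo_set_finite, rotated]) simp
qed

lemma gps_const_eq_iff [simp]: "gps_const a = gps_const b \<longleftrightarrow> a = b"
  by (metis gps_const_def)

lemma gps_zero_in_carrier: "(\<lambda>s. 0) \<in> gps_carrier"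
  using gps_const_in_carrier[of 0] by (simp add: gps_const_def)

lemma gps_mult_const_left:
  fixes g :: "'b::{monoid_mult,order} \<Rightarrow> 'a::ring_1"
  shows "gps_mult (gps_const c) g = (\<lambda>s. c * g s)"
proof
  fix s
  have "gps_mult (gps_const c) g s = (\<Sum>(u, v) \<in> {(1 :: 'b, s)}. gps_const c u * g v)"
    unfolding gps_mult_def by (rule sum.mono_neutral_left) (auto simp: gps_const_def split: if_splits)
  then show "gps_mult (gps_const c) g s = c * g s" by (simp add: gps_const_def)
qed

lemma gps_mult_const_right:
  fixes f :: "'b::{monoid_mult,order} \<Rightarrow> 'a::ring_1"
  shows "gps_mult f (gps_const c) = (\<lambda>s. f s * c)"
proof
  fix s
  have "gps_mult f (gps_const c) s = (\<Sum>(u, v) \<in> {(s, 1 :: 'b)}. f u * gps_const c v)"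
    unfolding gps_mult_def by (rule sum.mono_neutral_left) (auto simp: gps_const_def split: if_splits)
  then show "gps_mult f (gps_const c) s = f s * c" by (simp add: gps_const_def)
qed

lemma gps_mult_const_const: "gps_mult (gps_const a) (gps_const b) = gps_const (a * b)"
  unfolding gps_mult_const_left by (simp add: gps_const_def fun_eq_iff)

lemma gps_mult_diff_right:
  fixes f g h :: "'b::{monoid_mult,order} \<Rightarrow> 'a::ring_1"
  assumes som: "strictly_ordered_monoid TYPE('b)"
    and "f \<in> gps_carrier" "g \<in> gps_carrier" "h \<in> gps_carrier"
  shows "gps_mult f (\<lambda>s. g s - h s) = (\<lambda>s. gps_mult f g s - gps_mult f h s)"
proof
  fix s
  let ?F = "{(u, v). u \<in> gps_support f \<and> v \<in> gps_support g \<union> gps_support h \<and> u * v = s}"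
  have fin: "finite ?F"
    using assms(2-4) by (intro finite_factorizations[OF som] pwo_set_Un) (simp_all add: gps_carrier_iff_pwo_set)
  have "gps_mult f (\<lambda>s. g s - h s) s = (\<Sum>(u, v)\<in>?F. f u * (g v - h v))"
    by (rule gps_mult_eq_sum_factorizations[OF fin]) (auto simp: gps_support_def)
  also have "\<dots> = (\<Sum>(u, v)\<in>?F. f u * g v) - (\<Sum>(u, v)\<in>?F. f u * h v)"
    by (simp add: right_diff_distrib sum_subtractf split_def)
  also have "\<dots> = gps_mult f g s - gps_mult f h s"
    by (simp add: gps_mult_eq_sum_factorizations[OF fin])
  finally show "gps_mult f (\<lambda>s. g s - h s) s = gps_mult f g s - gps_mult f h s" .
qed

lemma gps_mult_diff_left:
  fixes f g h :: "'b::{monoid_mult,order} \<Rightarrow> 'a::ring_1"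
  assumes som: "strictly_ordered_monoid TYPE('b)"
    and "f \<in> gps_carrier" "g \<in> gps_carrier" "h \<in> gps_carrier"
  shows "gps_mult (\<lambda>s. f s - g s) h = (\<lambda>s. gps_mult f h s - gps_mult g h s)"
proof
  fix s
  let ?F = "{(u, v). u \<in> gps_support f \<union> gps_support g \<and> v \<in> gps_support h \<and> u * v = s}"
  have fin: "finite ?F"
    using assms(2-4) by (intro finite_factorizations[OF som] pwo_set_Un) (simp_all add: gps_carrier_iff_pwo_set)
  have "gps_mult (\<lambda>s. f s - g s) h s = (\<Sum>(u, v)\<in>?F. (f u - g u) * h v)"
    by (rule gps_mult_eq_sum_factorizations[OF fin]) (auto simp: gps_support_def)
  also have "\<dots> = (\<Sum>(u, v)\<in>?F. f u * h v) - (\<Sum>(u, v)\<in>?F. g u * h v)"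
    by (simp add: left_diff_distrib sum_subtractf split_def)
  also have "\<dots> = gps_mult f h s - gps_mult g h s"
    by (simp add: gps_mult_eq_sum_factorizations[OF fin])
  finally show "gps_mult (\<lambda>s. f s - g s) h s = gps_mult f h s - gps_mult g h s" .
qed

lemma S_ArmendarizD:
  fixes f g :: "'b::{monoid_mult,order} \<Rightarrow> 'a::ring_1"
  assumes "S_Armendariz TYPE('b) TYPE('a)" "f \<in> gps_carrier" "g \<in> gps_carrier"
    and "gps_mult f g = (\<lambda>s. 0)"
  shows "f u * g v = 0"
  using assms unfolding S_Armendariz_def by blast

lemma gps_idempotent_eq_const:
  fixes e :: "'b::{monoid_mult,order} \<Rightarrow> 'a::ring_1"
  assumes som: "strictly_ordered_monoid TYPE('b)" and arm: "S_Armendariz TYPE('b) TYPE('a)"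
    and e: "e \<in> gps_carrier" and idem: "gps_mult e e = e"
  shows "e = gps_const (e 1)"
proof
  fix s
  define d where "d = (\<lambda>s. gps_const 1 s - e s)"
  have d: "d \<in> gps_carrier" unfolding d_def by (rule gps_diff_closed[OF gps_const_in_carrier e])
  have "gps_mult e d = (\<lambda>s. 0)" "gps_mult d e = (\<lambda>s. 0)"
    unfolding d_def
    by (simp_all add: gps_mult_diff_right gps_mult_diff_left som e gps_const_in_carrier idem
        gps_mult_const_right gps_mult_const_left)
  then have ed: "e u * d v = 0" and de: "d u * e v = 0" for u v
    using S_ArmendarizD[OF arm] e d by blast+
  show "e s = gps_const (e 1) s"
  proof (cases "s = 1")
    case False
    then have "d s = - e s" by (simp add: d_def gps_const_def)
    then have "e s * e 1 = 0" using de[of s 1] by simp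
    moreover have "e s * d 1 = 0" by (rule ed)
    ultimately show ?thesis using False by (simp add: d_def gps_const_def right_diff_distrib)
  qed (simp add: gps_const_def)
qed

section \<open>Right annihilators of powers\<close>

lemma gps_ring_simps:
  "carrier gps_ring = gps_carrier"
  "monoid.mult gps_ring = gps_mult"
  "one gps_ring = gps_const 1"
  "zero gps_ring = (\<lambda>s. 0)"
  "add gps_ring = (\<lambda>f g s. f s + g s)"
  by (simp_all add: gps_ring_def gps_const_def)

lemma type_ring_simps:
  "carrier type_ring = UNIV"
  "monoid.mult type_ring = (*)"
  "one type_ring = 1"
  "zero type_ring = 0"
  "add type_ring = (+)"
  by (simp_all add: type_ring_def)

lemma r_ann_type_ring: "r_ann type_ring Q = {a. \<forall>x\<in>Q. x * a = 0}"
  by (simp add: r_ann_def type_ring_simps)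

lemma r_ann_gps_ring: "r_ann gps_ring P = {g \<in> gps_carrier. \<forall>p\<in>P. gps_mult p g = (\<lambda>s. 0)}"
  by (simp add: r_ann_def gps_ring_simps)

lemma set_pow_gps_ring_closed:
  fixes X :: "('b::{monoid_mult,order} \<Rightarrow> 'a::ring_1) set"
  assumes "ordered_monoid TYPE('b)" "X \<subseteq> gps_carrier"
  shows "set_pow gps_ring X (Suc n) \<subseteq> gps_carrier"
proof (induction n)
  case (Suc n)
  then show ?case
    using assms gps_mult_closed by (fastforce simp: gps_ring_simps)
qed (simp add: assms(2))

definition gps_coeffs :: "('b \<Rightarrow> 'a) set \<Rightarrow> 'a set" where
  "gps_coeffs X = {f u | f u. f \<in> X}"

lemma gps_coeffsI: "f \<in> X \<Longrightarrow> f u \<in> gps_coeffs X"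
  unfolding gps_coeffs_def by blast

lemma gps_coeffs_of_const: "gps_const c \<in> X \<Longrightarrow> c \<in> gps_coeffs (X :: ('b::{monoid_mult,order} \<Rightarrow> 'a::ring_1) set)"
  using gps_coeffsI[of "gps_const c" X 1] by (simp add: gps_const_def)

lemma set_pow_gps_coeff_mult_eq_zero:
  fixes X :: "('b::{monoid_mult,order} \<Rightarrow> 'a::ring_1) set"
  assumes "\<forall>c\<in>set_pow type_ring (gps_coeffs X) (Suc n). c * a = 0"
    and "p \<in> set_pow gps_ring X (Suc n)"
  shows "p s * a = 0"
  using assms
proof (induction n arbitrary: a p s)
  case 0
  then show ?case by (auto simp: gps_coeffs_def)
next
  case (Suc n)
  from Suc.prems(2) obtain q f where p: "p = gps_mult q f" "q \<in> set_pow gps_ring X (Suc n)" "f \<in> X"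
    by (auto simp: gps_ring_simps)
  have "q u * (f v * a) = 0" for u v
  proof (rule Suc.IH[OF _ p(2)], intro ballI)
    fix c assume "c \<in> set_pow type_ring (gps_coeffs X) (Suc n)"
    then have "c * f v \<in> set_pow type_ring (gps_coeffs X) (Suc (Suc n))"
      using p(3) by (auto simp: type_ring_simps gps_coeffs_def)
    then have "c * f v * a = 0" using Suc.prems(1) by blast
    then show "c * (f v * a) = 0" by (simp add: mult.assoc)
  qed
  then show ?case
    by (simp add: p(1) gps_mult_def sum_distrib_right split_def mult.assoc)
qed

lemma Armendariz_set_pow_annihilator:
  fixes X :: "('b::{monoid_mult,order} \<Rightarrow> 'a::ring_1) set"
  assumes som: "strictly_ordered_monoid TYPE('b)" and arm: "S_Armendariz TYPE('b) TYPE('a)"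
    and X: "X \<subseteq> gps_carrier" and g: "g \<in> gps_carrier"
    and ann: "\<forall>p\<in>set_pow gps_ring X (Suc n). gps_mult p g = (\<lambda>s. 0)"
    and c: "c \<in> set_pow type_ring (gps_coeffs X) (Suc n)"
  shows "c * g v = 0"
  using g ann c
proof (induction n arbitrary: g c v)
  case 0
  then obtain f u where "c = f u" "f \<in> X" by (auto simp: gps_coeffs_def)
  with 0 X show ?case by (metis S_ArmendarizD[OF arm] set_pow.simps(2) subsetD)
next
  case (Suc n)
  from Suc.prems(3) obtain c' f u where c: "c = c' * f u"
      "c' \<in> set_pow type_ring (gps_coeffs X) (Suc n)" "f \<in> X"
    by (auto simp: type_ring_simps gps_coeffs_def)
  have om: "ordered_monoid TYPE('b)" by (rule strictly_ordered_imp_ordered_monoid[OF som])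
  have f: "f \<in> gps_carrier" using X c(3) by blast
  have fg: "gps_mult f g \<in> gps_carrier" using gps_mult_closed[OF om f Suc.prems(1)] .
  have "gps_mult q (gps_mult f g) = (\<lambda>s. 0)" if q: "q \<in> set_pow gps_ring X (Suc n)" for q
  proof -
    have "q \<in> gps_carrier" using set_pow_gps_ring_closed[OF om X] q by blast
    moreover have "gps_mult q f \<in> set_pow gps_ring X (Suc (Suc n))"
      using q c(3) by (auto simp: gps_ring_simps)
    ultimately show ?thesis
      using Suc.prems(2) gps_mult_assoc[OF som _ f Suc.prems(1)] by metis
  qed
  then have IH: "c' * gps_mult f g w = 0" for w using Suc.IH[OF fg _ c(2)] by blast
  \<comment> \<open>The IH says that (c' f) g = 0, so the Armendariz property applies to c' f and g.\<close>
  have "gps_mult (gps_mult (gps_const c') f) g = (\<lambda>s. 0)"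
    using gps_mult_assoc[OF som gps_const_in_carrier f Suc.prems(1)] IH
    by (simp add: gps_mult_const_left)
  then have "gps_mult (gps_const c') f u * g v = 0"
    using S_ArmendarizD[OF arm] gps_mult_closed[OF om gps_const_in_carrier f] Suc.prems(1) by blast
  then show ?case by (simp add: gps_mult_const_left c(1) mult.assoc)
qed

lemma r_ann_set_pow_gps_ring:
  fixes X :: "('b::{monoid_mult,order} \<Rightarrow> 'a::ring_1) set"
  assumes som: "strictly_ordered_monoid TYPE('b)" and arm: "S_Armendariz TYPE('b) TYPE('a)"
    and X: "X \<subseteq> gps_carrier"
  shows "r_ann gps_ring (set_pow gps_ring X (Suc n)) =
    {g \<in> gps_carrier. \<forall>v. g v \<in> r_ann type_ring (set_pow type_ring (gps_coeffs X) (Suc n))}"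
proof (intro equalityI subsetI)
  fix g :: "'b \<Rightarrow> 'a" assume "g \<in> r_ann gps_ring (set_pow gps_ring X (Suc n))"
  then show "g \<in> {g \<in> gps_carrier. \<forall>v. g v \<in> r_ann type_ring (set_pow type_ring (gps_coeffs X) (Suc n))}"
    using Armendariz_set_pow_annihilator[OF som arm X] by (auto simp: r_ann_gps_ring r_ann_type_ring)
next
  fix g :: "'b \<Rightarrow> 'a" assume "g \<in> {g \<in> gps_carrier. \<forall>v. g v \<in> r_ann type_ring (set_pow type_ring (gps_coeffs X) (Suc n))}"
  then have g: "g \<in> gps_carrier" and coeffs: "\<forall>c\<in>set_pow type_ring (gps_coeffs X) (Suc n). c * g v = 0" for v
    by (simp_all add: r_ann_type_ring)
  have "gps_mult p g = (\<lambda>s. 0)" if "p \<in> set_pow gps_ring X (Suc n)" for p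
    using set_pow_gps_coeff_mult_eq_zero[OF coeffs that] by (simp add: gps_mult_def fun_eq_iff)
  with g show "g \<in> r_ann gps_ring (set_pow gps_ring X (Suc n))" by (simp add: r_ann_gps_ring)
qed

definition idempotent_generated :: "('a, 'm) ring_scheme \<Rightarrow> 'a set \<Rightarrow> bool" where
  "idempotent_generated R N \<longleftrightarrow>
     (\<exists>e\<in>carrier R. e \<otimes>\<^bsub>R\<^esub> e = e \<and> N = {e \<otimes>\<^bsub>R\<^esub> a | a. a \<in> carrier R})"

lemma idempotent_generated_gps_ring_iff:
  fixes N :: "'a::ring_1 set"
  assumes som: "strictly_ordered_monoid TYPE('b::{monoid_mult,order})"
    and arm: "S_Armendariz TYPE('b) TYPE('a)"
    and zero: "0 \<in> N" and right_closed: "\<And>a r. a \<in> N \<Longrightarrow> a * r \<in> N"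
  shows "idempotent_generated (gps_ring :: ('b \<Rightarrow> 'a) ring) {g \<in> gps_carrier. \<forall>v. g v \<in> N}
     \<longleftrightarrow> idempotent_generated type_ring N"
proof
  assume "idempotent_generated (gps_ring :: ('b \<Rightarrow> 'a) ring) {g \<in> gps_carrier. \<forall>v. g v \<in> N}"
  then obtain E :: "'b \<Rightarrow> 'a" where E: "E \<in> gps_carrier" "gps_mult E E = E"
    and N_eq: "{g \<in> gps_carrier. \<forall>v. g v \<in> N} = {gps_mult E h | h. h \<in> gps_carrier}"
    by (auto simp: idempotent_generated_def gps_ring_simps)
  define e where "e = E 1"
  have E_const: "E = gps_const e"
    unfolding e_def by (rule gps_idempotent_eq_const[OF som arm E])
  then have "e * e = e" using E(2) by (simp add: gps_mult_const_const)
  moreover have "N = {e * a | a. True}"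
  proof (intro equalityI subsetI)
    fix a assume "a \<in> N"
    then have "gps_const a \<in> {g \<in> gps_carrier. \<forall>v. g v \<in> N}"
      using zero gps_const_in_carrier[of a] by (simp add: gps_const_def)
    then obtain h where "gps_const a = gps_mult E h" using N_eq by blast
    then have "gps_const a (1 :: 'b) = gps_mult E h 1" by (rule fun_cong)
    then have "a = e * h 1" unfolding E_const gps_mult_const_left by (simp add: gps_const_def)
    then show "a \<in> {e * a | a. True}" by blast
  next
    fix x assume "x \<in> {e * a | a. True}"
    then obtain r where x: "x = e * r" by blast
    have "gps_mult E (gps_const 1) \<in> {g \<in> gps_carrier. \<forall>v. g v \<in> N}"
      using N_eq gps_const_in_carrier by blast
    then have "gps_const (e * 1) (1 :: 'b) \<in> N" unfolding E_const gps_mult_const_const by blast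
    then have "e \<in> N" by (simp add: gps_const_def)
    then show "x \<in> N" unfolding x by (rule right_closed)
  qed
  ultimately show "idempotent_generated type_ring N"
    by (auto simp: idempotent_generated_def type_ring_simps)
next
  assume "idempotent_generated type_ring N"
  then obtain e where idem: "e * e = e" and N_eq: "N = {e * a | a. True}"
    by (auto simp: idempotent_generated_def type_ring_simps)
  have "{g \<in> gps_carrier. \<forall>v. g v \<in> N} = {gps_mult (gps_const e) h | h. h \<in> gps_carrier}"
  proof (intro equalityI subsetI)
    fix g assume g: "g \<in> {g \<in> gps_carrier. \<forall>v. g v \<in> N}"
    have "e * g v = g v" for v
    proof -
      obtain r where "g v = e * r" using g N_eq by blast
      then show ?thesis using idem by (simp add: mult.assoc[symmetric])
    qed
    then have "g = gps_mult (gps_const e) g" by (simp add: gps_mult_const_left)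
    with g show "g \<in> {gps_mult (gps_const e) h | h. h \<in> gps_carrier}" by blast
  next
    fix g assume "g \<in> {gps_mult (gps_const e) h | h. h \<in> gps_carrier}"
    then obtain h where "h \<in> gps_carrier" "g = (\<lambda>s. e * h s)"
      by (auto simp: gps_mult_const_left)
    then show "g \<in> {g \<in> gps_carrier. \<forall>v. g v \<in> N}"
      using N_eq gps_scale_closed by blast
  qed
  moreover have "gps_mult (gps_const e) (gps_const e) = gps_const e"
    by (simp add: gps_mult_const_const idem)
  ultimately show "idempotent_generated (gps_ring :: ('b \<Rightarrow> 'a) ring) {g \<in> gps_carrier. \<forall>v. g v \<in> N}"
    unfolding idempotent_generated_def gps_ring_simps using gps_const_in_carrier by blast
qed

lemma idempotent_generated_r_ann_set_pow_iff:
  fixes X :: "('b::{monoid_mult,order} \<Rightarrow> 'a::ring_1) set"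
  assumes som: "strictly_ordered_monoid TYPE('b)" and arm: "S_Armendariz TYPE('b) TYPE('a)"
    and X: "X \<subseteq> gps_carrier"
  shows "idempotent_generated gps_ring (r_ann gps_ring (set_pow gps_ring X (Suc n)))
     \<longleftrightarrow> idempotent_generated type_ring (r_ann type_ring (set_pow type_ring (gps_coeffs X) (Suc n)))"
  unfolding r_ann_set_pow_gps_ring[OF som arm X]
  by (rule idempotent_generated_gps_ring_iff[OF som arm]) (auto simp: r_ann_type_ring mult.assoc[symmetric])

inductive_set additive_closure :: "'a::ring_1 set \<Rightarrow> 'a set" for C where
  zero: "0 \<in> additive_closure C"
| base: "c \<in> C \<Longrightarrow> c \<in> additive_closure C"
| add: "x \<in> additive_closure C \<Longrightarrow> y \<in> additive_closure C \<Longrightarrow> x + y \<in> additive_closure C"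
| uminus: "x \<in> additive_closure C \<Longrightarrow> - x \<in> additive_closure C"

lemma set_pow_mono: "X \<subseteq> Y \<Longrightarrow> set_pow R X (Suc n) \<subseteq> set_pow R Y (Suc n)"
  by (induction n) auto

lemma set_pow_additive_closure_mult_eq_zero:
  fixes a :: "'a::ring_1"
  assumes "\<forall>c\<in>set_pow type_ring C (Suc n). c * a = 0"
    and "x \<in> set_pow type_ring (additive_closure C) (Suc n)"
  shows "x * a = 0"
  using assms
proof (induction n arbitrary: a x)
  case 0
  then have "x \<in> additive_closure C" "\<forall>c\<in>C. c * a = 0" by simp_all
  then show ?case by (induction x rule: additive_closure.induct) (auto simp: distrib_right)
next
  case (Suc n)
  from Suc.prems(2) obtain x' y where x: "x = x' * y"
      "x' \<in> set_pow type_ring (additive_closure C) (Suc n)" "y \<in> additive_closure C"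
    by (auto simp: type_ring_simps)
  from x(3) have "\<forall>c\<in>set_pow type_ring C (Suc n). c * (y * a) = 0"
  proof (induction y rule: additive_closure.induct)
    case (base c')
    show ?case
    proof
      fix c assume "c \<in> set_pow type_ring C (Suc n)"
      then have "c * c' \<in> set_pow type_ring C (Suc (Suc n))"
        using base by (auto simp: type_ring_simps)
      then have "c * c' * a = 0" using Suc.prems(1) by blast
      then show "c * (c' * a) = 0" by (simp add: mult.assoc)
    qed
  qed (simp_all add: distrib_left distrib_right)
  then have "x' * (y * a) = 0" using Suc.IH x(2) by blast
  then show ?case by (simp add: x(1) mult.assoc)
qed

lemma r_ann_set_pow_eq_if_between_additive_closure:
  fixes C D :: "'a::ring_1 set"
  assumes "C \<subseteq> D" "D \<subseteq> additive_closure C"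
  shows "r_ann type_ring (set_pow type_ring D (Suc n)) = r_ann type_ring (set_pow type_ring C (Suc n))"
proof (intro equalityI subsetI)
  fix a assume "a \<in> r_ann type_ring (set_pow type_ring D (Suc n))"
  then show "a \<in> r_ann type_ring (set_pow type_ring C (Suc n))"
    using set_pow_mono[OF assms(1)] by (auto simp: r_ann_type_ring)
next
  fix a assume "a \<in> r_ann type_ring (set_pow type_ring C (Suc n))"
  then show "a \<in> r_ann type_ring (set_pow type_ring D (Suc n))"
    using set_pow_additive_closure_mult_eq_zero set_pow_mono[OF assms(2)]
    by (fastforce simp: r_ann_type_ring)
qed

lemma a_inv_type_ring: "a_inv type_ring x = - (x :: 'a::ring_1)"
  unfolding a_inv_def m_inv_def by (rule the_equality) (auto simp: type_ring_def eq_neg_iff_add_eq_0)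

lemma a_inv_gps_ring:
  "f \<in> gps_carrier \<Longrightarrow> a_inv gps_ring f = (\<lambda>s. - f s)"
  unfolding a_inv_def m_inv_def
  by (rule the_equality) (auto simp: gps_ring_def gps_uminus_closed fun_eq_iff eq_neg_iff_add_eq_0)

lemma right_ideal_type_ring_iff:
  "right_ideal J (type_ring :: 'a::ring_1 ring) \<longleftrightarrow>
     0 \<in> J \<and> (\<forall>x\<in>J. \<forall>y\<in>J. x + y \<in> J) \<and> (\<forall>x\<in>J. - x \<in> J) \<and> (\<forall>x\<in>J. \<forall>r. x * r \<in> J)"
  unfolding right_ideal_def additive_subgroup_def subgroup_def a_inv_def[symmetric]
  by (auto simp: type_ring_simps a_inv_type_ring)

lemma right_ideal_gps_ring_iff:
  "right_ideal I (gps_ring :: ('b::{monoid_mult,order} \<Rightarrow> 'a::ring_1) ring) \<longleftrightarrow>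
     I \<subseteq> gps_carrier \<and> (\<lambda>s. 0) \<in> I \<and> (\<forall>f\<in>I. \<forall>g\<in>I. (\<lambda>s. f s + g s) \<in> I) \<and>
     (\<forall>f\<in>I. (\<lambda>s. - f s) \<in> I) \<and> (\<forall>f\<in>I. \<forall>g\<in>gps_carrier. gps_mult f g \<in> I)"
proof -
  have "(\<forall>f\<in>I. a_inv gps_ring f \<in> I) \<longleftrightarrow> (\<forall>f\<in>I. (\<lambda>s. - f s) \<in> I)" if "I \<subseteq> gps_carrier"
    by (rule ball_cong[OF refl]) (simp add: a_inv_gps_ring[OF subsetD[OF that]])
  then show ?thesis
    unfolding right_ideal_def additive_subgroup_def subgroup_def a_inv_def[symmetric]
    by (auto simp: gps_ring_simps)
qed

section \<open>Generalized Baer and quasi-Baer rings\<close>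

lemma ex_pos_nat_iff_ex_Suc: "(\<exists>n::nat. n > 0 \<and> P n) \<longleftrightarrow> (\<exists>n. P (Suc n))"
proof
  assume "\<exists>n. n > 0 \<and> P n"
  then obtain n where "n > 0" "P n" by blast
  then show "\<exists>n. P (Suc n)" by (intro exI[of _ "n - 1"]) simp
next
  assume "\<exists>n. P (Suc n)"
  then obtain n where "P (Suc n)" ..
  then show "\<exists>n. n > 0 \<and> P n" by (intro exI[of _ "Suc n"]) simp
qed

lemma gen_right_Baer_iff_idempotent_generated:
  "gen_right_Baer R \<longleftrightarrow> (\<forall>X. X \<subseteq> carrier R \<and> X \<noteq> {} \<longrightarrow>
     (\<exists>n. idempotent_generated R (r_ann R (set_pow R X (Suc n)))))"
  unfolding gen_right_Baer_def idempotent_generated_def ex_pos_nat_iff_ex_Suc by simp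

lemma gen_right_quasi_Baer_iff_idempotent_generated:
  "gen_right_quasi_Baer R \<longleftrightarrow> (\<forall>I. right_ideal I R \<longrightarrow>
     (\<exists>n. idempotent_generated R (r_ann R (set_pow R I (Suc n)))))"
  unfolding gen_right_quasi_Baer_def idempotent_generated_def ex_pos_nat_iff_ex_Suc by simp

lemma gen_right_Baer_gps_ring:
  assumes som: "strictly_ordered_monoid TYPE('b::{monoid_mult,order})"
    and arm: "S_Armendariz TYPE('b) TYPE('a::ring_1)"
    and baer: "gen_right_Baer (type_ring :: 'a ring)"
  shows "gen_right_Baer (gps_ring :: ('b \<Rightarrow> 'a) ring)"
  unfolding gen_right_Baer_iff_idempotent_generated gps_ring_simps
proof (intro allI impI, elim conjE)
  fix X :: "('b \<Rightarrow> 'a) set" assume X: "X \<subseteq> gps_carrier" "X \<noteq> {}"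
  then have "gps_coeffs X \<noteq> {}" by (auto simp: gps_coeffs_def)
  then obtain n where
    "idempotent_generated type_ring (r_ann type_ring (set_pow type_ring (gps_coeffs X) (Suc n)))"
    using baer by (auto simp: gen_right_Baer_iff_idempotent_generated type_ring_simps)
  then show "\<exists>n. idempotent_generated gps_ring (r_ann gps_ring (set_pow gps_ring X (Suc n)))"
    using idempotent_generated_r_ann_set_pow_iff[OF som arm X(1)] by blast
qed

lemma gen_right_Baer_coeff_ring:
  assumes som: "strictly_ordered_monoid TYPE('b::{monoid_mult,order})"
    and arm: "S_Armendariz TYPE('b) TYPE('a::ring_1)"
    and baer: "gen_right_Baer (gps_ring :: ('b \<Rightarrow> 'a) ring)"
  shows "gen_right_Baer (type_ring :: 'a ring)"
  unfolding gen_right_Baer_iff_idempotent_generated type_ring_simps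
proof (intro allI impI, elim conjE)
  fix X :: "'a set" assume "X \<noteq> {}"
  let ?X = "gps_const ` X :: ('b \<Rightarrow> 'a) set"
  have X: "?X \<subseteq> gps_carrier" using gps_const_in_carrier by blast
  with \<open>X \<noteq> {}\<close> obtain n where "idempotent_generated gps_ring (r_ann gps_ring (set_pow gps_ring ?X (Suc n)))"
    using baer by (auto simp: gen_right_Baer_iff_idempotent_generated gps_ring_simps)
  then have "idempotent_generated type_ring (r_ann type_ring (set_pow type_ring (gps_coeffs ?X) (Suc n)))"
    using idempotent_generated_r_ann_set_pow_iff[OF som arm X] by blast
  moreover have "X \<subseteq> gps_coeffs ?X"
    using gps_coeffs_of_const by blast
  moreover have "gps_coeffs ?X \<subseteq> additive_closure X"
    by (auto simp: gps_coeffs_def gps_const_def intro: additive_closure.zero additive_closure.base)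
  ultimately show "\<exists>n. idempotent_generated type_ring (r_ann type_ring (set_pow type_ring X (Suc n)))"
    using r_ann_set_pow_eq_if_between_additive_closure by metis
qed

lemma gen_right_quasi_Baer_gps_ring:
  assumes som: "strictly_ordered_monoid TYPE('b::{monoid_mult,order})"
    and arm: "S_Armendariz TYPE('b) TYPE('a::ring_1)"
    and qbaer: "gen_right_quasi_Baer (type_ring :: 'a ring)"
  shows "gen_right_quasi_Baer (gps_ring :: ('b \<Rightarrow> 'a) ring)"
  unfolding gen_right_quasi_Baer_iff_idempotent_generated
proof (intro allI impI)
  fix I :: "('b \<Rightarrow> 'a) set" assume "right_ideal I gps_ring"
  then have I: "I \<subseteq> gps_carrier" and I_mult: "\<And>f g. f \<in> I \<Longrightarrow> g \<in> gps_carrier \<Longrightarrow> gps_mult f g \<in> I"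
    by (simp_all add: right_ideal_gps_ring_iff)
  let ?J = "additive_closure (gps_coeffs I)"
  have coeff_mult: "c * r \<in> gps_coeffs I" if c: "c \<in> gps_coeffs I" for c r
  proof -
    obtain f u where f: "c = f u" "f \<in> I" using c unfolding gps_coeffs_def by blast
    have "gps_mult f (gps_const r) \<in> I" using I_mult[OF f(2) gps_const_in_carrier] .
    then have "gps_mult f (gps_const r) u \<in> gps_coeffs I" by (rule gps_coeffsI)
    then show ?thesis by (simp add: gps_mult_const_right f(1))
  qed
  have "x * r \<in> ?J" if "x \<in> ?J" for x r
    using that
  proof induction
    case (base c)
    then show ?case by (simp add: coeff_mult additive_closure.base)
  qed (simp_all add: distrib_right additive_closure.intros)
  then have "right_ideal ?J type_ring"
    by (simp add: right_ideal_type_ring_iff additive_closure.intros)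
  then obtain n where "idempotent_generated type_ring (r_ann type_ring (set_pow type_ring ?J (Suc n)))"
    using qbaer by (auto simp: gen_right_quasi_Baer_iff_idempotent_generated)
  moreover have "r_ann type_ring (set_pow type_ring ?J (Suc n)) =
      r_ann type_ring (set_pow type_ring (gps_coeffs I) (Suc n))"
    by (rule r_ann_set_pow_eq_if_between_additive_closure) (auto intro: additive_closure.base)
  ultimately show "\<exists>n. idempotent_generated gps_ring (r_ann gps_ring (set_pow gps_ring I (Suc n)))"
    using idempotent_generated_r_ann_set_pow_iff[OF som arm I] by auto
qed

lemma sum_mem_if_add_closed:
  assumes "0 \<in> J" "\<And>x y. x \<in> J \<Longrightarrow> y \<in> J \<Longrightarrow> x + y \<in> J" "\<And>i. i \<in> A \<Longrightarrow> F i \<in> J"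
  shows "sum F A \<in> J"
  using assms(3) by (induction A rule: infinite_finite_induct) (simp_all add: assms(1,2))

lemma gen_right_quasi_Baer_coeff_ring:
  assumes som: "strictly_ordered_monoid TYPE('b::{monoid_mult,order})"
    and arm: "S_Armendariz TYPE('b) TYPE('a::ring_1)"
    and qbaer: "gen_right_quasi_Baer (gps_ring :: ('b \<Rightarrow> 'a) ring)"
  shows "gen_right_quasi_Baer (type_ring :: 'a ring)"
  unfolding gen_right_quasi_Baer_iff_idempotent_generated
proof (intro allI impI)
  fix J :: "'a set" assume "right_ideal J type_ring"
  then have J: "0 \<in> J" "\<And>x y. x \<in> J \<Longrightarrow> y \<in> J \<Longrightarrow> x + y \<in> J" "\<And>x. x \<in> J \<Longrightarrow> - x \<in> J"
    "\<And>x r. x \<in> J \<Longrightarrow> x * r \<in> J"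
    by (simp_all add: right_ideal_type_ring_iff)
  define I :: "('b \<Rightarrow> 'a) set" where "I = {f \<in> gps_carrier. \<forall>u. f u \<in> J}"
  have "gps_mult f g u \<in> J" if "f \<in> I" for f g u
    unfolding gps_mult_def using that J by (auto simp: I_def intro!: sum_mem_if_add_closed)
  then have "right_ideal I gps_ring"
    using J strictly_ordered_imp_ordered_monoid[OF som]
    by (auto simp: right_ideal_gps_ring_iff I_def gps_zero_in_carrier gps_add_closed gps_uminus_closed
        gps_mult_closed)
  then obtain n where "idempotent_generated gps_ring (r_ann gps_ring (set_pow gps_ring I (Suc n)))"
    using qbaer by (auto simp: gen_right_quasi_Baer_iff_idempotent_generated)
  then have "idempotent_generated type_ring (r_ann type_ring (set_pow type_ring (gps_coeffs I) (Suc n)))"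
    using idempotent_generated_r_ann_set_pow_iff[OF som arm] by (auto simp: I_def)
  moreover have "gps_coeffs I = J"
  proof (intro equalityI subsetI)
    fix x assume "x \<in> J"
    then have "gps_const x \<in> I" using J(1) gps_const_in_carrier by (auto simp: I_def gps_const_def)
    then show "x \<in> gps_coeffs I" by (rule gps_coeffs_of_const)
  qed (auto simp: gps_coeffs_def I_def)
  ultimately show "\<exists>n. idempotent_generated type_ring (r_ann type_ring (set_pow type_ring J (Suc n)))"
    by blast
qed

theorem corollary3p8:
  assumes "strictly_ordered_monoid TYPE('b::{monoid_mult,order})"
      and "quasitotally_ordered TYPE('b)"
      and "S_Armendariz TYPE('b) TYPE('a::ring_1)"
  shows "(gen_right_Baer (gps_ring :: ('b \<Rightarrow> 'a) ring) \<longleftrightarrow> gen_right_Baer (type_ring :: 'a ring))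
       \<and> (gen_right_quasi_Baer (gps_ring :: ('b \<Rightarrow> 'a) ring) \<longleftrightarrow> gen_right_quasi_Baer (type_ring :: 'a ring))"
  using gen_right_Baer_gps_ring[OF assms(1,3)] gen_right_Baer_coeff_ring[OF assms(1,3)]
    gen_right_quasi_Baer_gps_ring[OF assms(1,3)] gen_right_quasi_Baer_coeff_ring[OF assms(1,3)]
  by blast

end
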